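(* Let $b\geq2$ and even, $k\leq n-2$ and $\mathbf s=s_1s_2\ldots s_k$. If $\mathbf t$ is the last sequence in $\mathbf s\,|\,R_n(b)$ when this set is listed in co-Reflected Gray Code Order, then $\mathbf t$ has one of the following forms: 1. $\mathbf t=\mathbf sM0\ldots0$ if $U_{k+1}$ is even and $M$ is even, 2. $\mathbf t=\mathbf sM(M+1)0\ldots0$ if $U_{k+1}$ is even and $M$ is odd, 3. $\mathbf t=\mathbf s0\ldots0$ if $U_{k+1}$ is odd, where $M=\min\{b,\max\{s_i\}_{i=1}^k+1\}$ and $U_{k+1}=\sum_{i=1}^k[s_i\neq0 \text{ and } s_i \text{ is even}]$.
   Context: A restricted growth function of length $n$ is an integer sequence $s_1s_2\ldots s_n$ with $s_1=0$ and $0\leq s_{i+1}\leq \max\{s_j\}_{j=1}^i+1$ for $1\leq i\leq n-1$; $R_n$ is the set of these, and for $b\geq1$, $R_n(b)=\{s_1\ldots s_n\in R_n : \max\{s_i\}_{i=1}^n\leq b\}$. For a sequence $\mathbf u$, $\mathbf u\,|\,S$ denotes the subset of $S$ of sequences having prefix $\mathbf u$. The co-Reflected Gray Code Order on $\{0,1,\ldots,m-1\}^n$ ($m\geq2$) is defined by: $s_1\ldots s_n$ is less than $t_1\ldots t_n$ if, for the position $k$ with $s_i=t_i$ ($1\leq i\leq k-1$) and $s_k\neq t_k$, either $U_k$ is even and $s_k<t_k$, or $U_k$ is odd and $s_k>t_k$, where $U_k=|\{i\in\{1,\ldots,k-1\}: s_i\neq0,\ s_i \text{ even}\}|$. $[P]$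 denotes the Iverson bracket (1 if $P$ is true, 0 otherwise). *)

theory Defs
  imports Main
begin

(* Sequences s_1 ... s_n are represented as lists; s_i is  s ! (i-1). *)

definition rgf :: "nat \<Rightarrow> nat list \<Rightarrow> bool" where
  "rgf n s \<longleftrightarrow> length s = n \<and> (0 < n \<longrightarrow> s ! 0 = 0) \<and>
     (\<forall>i. Suc i < n \<longrightarrow> s ! Suc i \<le> Max (set (take (Suc i) s)) + 1)"

definition R_b :: "nat \<Rightarrow> nat \<Rightarrow> nat list set" where
  "R_b n b = {s. rgf n s \<and> (\<forall>x\<in>set s. x \<le> b)}"

definition with_prefix :: "nat list \<Rightarrow> nat list set \<Rightarrow> nat list set" where
  "with_prefix u S = {s \<in> S. take (length u) s = u}"

text \<open>U_k for a sequence s: number of i in {1..k-1} with s_i nonzero and even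
  (here given via the 0-indexed length-(k-1) prefix).\<close>
definition U :: "nat list \<Rightarrow> nat \<Rightarrow> nat" where
  "U s k = card {i. i < k - 1 \<and> s ! i \<noteq> 0 \<and> even (s ! i)}"

definition coRGC_less :: "nat list \<Rightarrow> nat list \<Rightarrow> bool" where
  "coRGC_less s t \<longleftrightarrow> length s = length t \<and>
     (\<exists>j < length s. take j s = take j t \<and> s ! j \<noteq> t ! j \<and>
        ((even (U s (Suc j)) \<and> s ! j < t ! j) \<or> (odd (U s (Suc j)) \<and> s ! j > t ! j)))"

definition is_last_coRGC :: "nat list set \<Rightarrow> nat list \<Rightarrow> bool" where
  "is_last_coRGC S t \<longleftrightarrow> t \<in> S \<and> (\<forall>u\<in>S. u \<noteq> t \<longrightarrow> coRGC_less u t)"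

end

theory Submission
  imports Defs
begin

text \<open>In co-RGC order a sequence is maximal once, at every position, its entry is the largest
  admissible one when the number of preceding nonzero even entries is even, and is 0 when that
  number is odd. Past the prefix \<open>s\<close>, the even case forces the entry \<open>M\<close>; when \<open>M\<close> is even this
  makes the count odd, so zeros may follow. When \<open>M\<close> is odd (hence \<open>M < b\<close>, since \<open>b\<close> is even,
  and \<open>M = max s + 1\<close>) the count stays even and the next entry must be \<open>M + 1\<close>, which is even;
  then zeros follow. If the count after \<open>s\<close> is already odd, zeros follow immediately.\<close>

definition nz_even_count :: "nat list \<Rightarrow> nat" where
  "nz_even_count xs = length (filter (\<lambda>v. v \<noteq> 0 \<and> even v) xs)"

lemma U_eq_nz_even_count_take:
  assumes "j \<le> length x"
  shows "U x (Suc j) = nz_even_count (take j x)"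
proof -
  have "{i. i < length (take j x) \<and> take j x ! i \<noteq> 0 \<and> even (take j x ! i)}
      = {i. i < j \<and> x ! i \<noteq> 0 \<and> even (x ! i)}"
    using assms by auto
  then show ?thesis
    unfolding U_def nz_even_count_def length_filter_conv_card by simp
qed

lemma nz_even_count_append_zeros [simp]:
  "nz_even_count (xs @ replicate m 0) = nz_even_count xs"
  by (simp add: nz_even_count_def)

lemma rgf_take:
  assumes "rgf n x" "m \<le> n"
  shows "rgf m (take m x)"
  using assms unfolding rgf_def by (auto simp: min_def)

lemma rgf_nth_le_Max:
  assumes "rgf n u" "0 < j" "j < n"
  shows "u ! j \<le> Max (set (take j u)) + 1"
proof -
  obtain i where "j = Suc i" using assms(2) by (cases j) auto
  then show ?thesis using assms(1,3) unfolding rgf_def by blast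
qed

lemma rgf_snoc:
  assumes "xs \<noteq> []" "rgf (length xs) xs" "y \<le> Max (set xs) + 1"
  shows "rgf (Suc (length xs)) (xs @ [y])"
  unfolding rgf_def
proof (intro conjI allI impI)
  show "(xs @ [y]) ! 0 = 0" using assms(1,2) unfolding rgf_def by (simp add: nth_append)
  fix i assume "Suc i < Suc (length xs)"
  then consider "Suc i < length xs" | "Suc i = length xs" by linarith
  then show "(xs @ [y]) ! Suc i \<le> Max (set (take (Suc i) (xs @ [y]))) + 1"
    by cases (use assms(2,3) in \<open>simp_all add: rgf_def nth_append\<close>)
qed simp

lemma rgf_append_zeros:
  assumes "xs \<noteq> []" "rgf (length xs) xs"
  shows "rgf (length xs + m) (xs @ replicate m 0)"
proof (induction m)
  case (Suc m)
  then have "rgf (Suc (length (xs @ replicate m 0))) ((xs @ replicate m 0) @ [0])"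
    using assms(1) by (intro rgf_snoc) auto
  then show ?case by (simp add: replicate_append_same)
qed (use assms in simp)

lemma R_b_nth_le:
  assumes "u \<in> R_b n b" "0 < j" "j < n"
  shows "u ! j \<le> min b (Max (set (take j u)) + 1)"
proof -
  have "rgf n u" "\<forall>x\<in>set u. x \<le> b" using assms(1) unfolding R_b_def by auto
  moreover have "u ! j \<in> set u" using \<open>rgf n u\<close> assms(3) unfolding rgf_def by simp
  ultimately show ?thesis using rgf_nth_le_Max assms(2,3) by simp
qed

lemma with_prefix_R_b_prefix:
  assumes "u \<in> with_prefix s (R_b n b)" "length s \<le> n"
  shows "rgf (length s) s" "\<forall>x\<in>set s. x \<le> b"
proof -
  have u: "rgf n u" "\<forall>x\<in>set u. x \<le> b" and s: "s = take (length s) u"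
    using assms(1) unfolding with_prefix_def R_b_def by auto
  show "rgf (length s) s" using rgf_take[OF u(1) assms(2)] s by simp
  show "\<forall>x\<in>set s. x \<le> b" using u(2) s by (metis in_set_takeD)
qed

lemma is_last_coRGC_eqI:
  assumes "is_last_coRGC S t" "t0 \<in> S" "\<And>u. u \<in> S \<Longrightarrow> \<not> coRGC_less t0 u"
  shows "t = t0"
proof (rule ccontr)
  assume "t \<noteq> t0"
  with assms(1,2) have "coRGC_less t0 t" unfolding is_last_coRGC_def by auto
  moreover have "t \<in> S" using assms(1) unfolding is_last_coRGC_def by simp
  ultimately show False using assms(3) by blast
qed

lemma not_coRGC_less_append_zeros:
  assumes "length u = length p + m"
    and "odd (nz_even_count p)"
    and "\<And>j. j < length p \<Longrightarrow> take j u = take j p \<Longrightarrow> u ! j \<noteq> p ! j \<Longrightarrow>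
           (if even (U p (Suc j)) then u ! j \<le> p ! j else p ! j = 0)"
  shows "\<not> coRGC_less (p @ replicate m 0) u"
proof
  define t0 where "t0 = p @ replicate m 0"
  assume "coRGC_less (p @ replicate m 0) u"
  then obtain j where j: "j < length t0" "take j t0 = take j u" "t0 ! j \<noteq> u ! j"
      "(even (U t0 (Suc j)) \<and> t0 ! j < u ! j) \<or> (odd (U t0 (Suc j)) \<and> t0 ! j > u ! j)"
    unfolding coRGC_less_def t0_def by blast
  have U_t0: "U t0 (Suc j) = nz_even_count (take j t0)"
    using j(1) by (simp add: U_eq_nz_even_count_take)
  show False
  proof (cases "j < length p")
    case True
    then have "take j t0 = take j p" "t0 ! j = p ! j" by (simp_all add: t0_def nth_append)
    moreover have "U p (Suc j) = nz_even_count (take j p)"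
      using True by (simp add: U_eq_nz_even_count_take)
    ultimately show False
      using assms(3)[OF True] j(2-4) U_t0 by (auto split: if_splits)
  next
    case False
    then have "take j t0 = p @ replicate (j - length p) 0" "t0 ! j = 0"
      using j(1) by (simp_all add: t0_def nth_append)
    then show False using j(4) U_t0 assms(2) by simp
  qed
qed

lemma last_coRGC_eq_append_zeros:
  assumes last: "is_last_coRGC (with_prefix s (R_b n b)) t"
    and "take (length s) p = s" "length p \<le> n" "p \<noteq> []"
    and "rgf (length p) p" "\<forall>x\<in>set p. x \<le> b"
    and "odd (nz_even_count p)"
    and extremal: "\<And>u j. u \<in> with_prefix s (R_b n b) \<Longrightarrow> length s \<le> j \<Longrightarrow> j < length p \<Longrightarrow>
           take j u = take j p \<Longrightarrow> (if even (U p (Suc j)) then u ! j \<le> p ! j else p ! j = 0)"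
  shows "t = p @ replicate (n - length p) 0"
proof (rule is_last_coRGC_eqI[OF last])
  have "length s \<le> length p" using arg_cong[OF assms(2), of length] by simp
  have "rgf n (p @ replicate (n - length p) 0)"
    using rgf_append_zeros[OF assms(4,5), of "n - length p"] assms(3) by simp
  then show "p @ replicate (n - length p) 0 \<in> with_prefix s (R_b n b)"
    using assms(2,6) \<open>length s \<le> length p\<close> unfolding with_prefix_def R_b_def by auto
  fix u assume u: "u \<in> with_prefix s (R_b n b)"
  then have len: "length u = length p + (n - length p)" and prefix: "take (length s) u = s"
    using assms(3) unfolding with_prefix_def R_b_def rgf_def by auto
  show "\<not> coRGC_less (p @ replicate (n - length p) 0) u"
  proof (rule not_coRGC_less_append_zeros[OF len assms(7)])
    fix j assume j: "j < length p" "take j u = take j p" "u ! j \<noteq> p ! j"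
    have "length s \<le> j"
    proof (rule ccontr)
      assume "\<not> length s \<le> j"
      then have "u ! j = s ! j" "p ! j = s ! j"
        using prefix assms(2) by (metis not_le nth_take)+
      with j(3) show False by simp
    qed
    then show "if even (U p (Suc j)) then u ! j \<le> p ! j else p ! j = 0"
      using extremal[OF u _ j(1,2)] by simp
  qed
qed

context
  fixes b n :: nat and s :: "nat list"
  assumes prefix_nonempty: "s \<noteq> []" and room: "length s + 2 \<le> n"
    and prefix_valid: "rgf (length s) s" "\<forall>x\<in>set s. x \<le> b"
begin

lemma last_coRGC_odd_count:
  assumes "is_last_coRGC (with_prefix s (R_b n b)) t" "odd (nz_even_count s)"
  shows "t = s @ replicate (n - length s) 0"
  by (rule last_coRGC_eq_append_zeros) (use assms prefix_nonempty room prefix_valid in auto)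

lemma R_b_nth_after_prefix_le:
  assumes "u \<in> with_prefix s (R_b n b)"
  shows "u ! length s \<le> min b (Max (set s) + 1)"
  using R_b_nth_le[of u n b "length s"] assms prefix_nonempty room
  unfolding with_prefix_def by auto

lemma last_coRGC_even_count_even_max:
  fixes M defines "M \<equiv> min b (Max (set s) + 1)"
  assumes "is_last_coRGC (with_prefix s (R_b n b)) t" "even (nz_even_count s)"
    and "even M" "b \<ge> 1"
  shows "t = s @ [M] @ replicate (n - length s - 1) 0"
proof -
  have "M \<noteq> 0" "M \<le> b" using assms(5) by (simp_all add: M_def)
  then have odd_count: "odd (nz_even_count (s @ [M]))"
    using assms(3,4) by (simp add: nz_even_count_def)
  have rgf_p: "rgf (length (s @ [M])) (s @ [M])"
    using prefix_nonempty prefix_valid by (auto intro: rgf_snoc simp: M_def)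
  have "t = (s @ [M]) @ replicate (n - length (s @ [M])) 0"
  proof (rule last_coRGC_eq_append_zeros[OF assms(2) _ _ _ rgf_p _ odd_count])
    fix u j assume u: "u \<in> with_prefix s (R_b n b)" and "length s \<le> j" "j < length (s @ [M])"
    then have "j = length s" by simp
    then show "if even (U (s @ [M]) (Suc j)) then u ! j \<le> (s @ [M]) ! j else (s @ [M]) ! j = 0"
      using R_b_nth_after_prefix_le[OF u] assms(3)
      by (simp add: U_eq_nz_even_count_take M_def)
  qed (use \<open>M \<le> b\<close> prefix_valid room in auto)
  then show ?thesis by simp
qed

lemma last_coRGC_even_count_odd_max:
  fixes M defines "M \<equiv> min b (Max (set s) + 1)"
  assumes "is_last_coRGC (with_prefix s (R_b n b)) t" "even (nz_even_count s)"
    and "odd M" "even b"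
  shows "t = s @ [M, M + 1] @ replicate (n - length s - 2) 0"
proof -
  define p where "p = s @ [M, M + 1]"
  have "M \<noteq> b" using assms(4,5) by auto
  then have M: "M = Max (set s) + 1" "M + 1 \<le> b" by (auto simp: M_def min_def split: if_splits)
  then have Max_sM: "Max (set (s @ [M])) = M" using prefix_nonempty by (simp add: max_def)
  have "rgf (Suc (length s)) (s @ [M])"
    using prefix_nonempty prefix_valid M by (intro rgf_snoc) auto
  then have rgf_p: "rgf (length p) p"
    using rgf_snoc[of "s @ [M]" "M + 1"] Max_sM by (simp add: p_def)
  have odd_count: "odd (nz_even_count p)"
    using assms(3,4) by (simp add: p_def nz_even_count_def)
  have "t = p @ replicate (n - length p) 0"
  proof (rule last_coRGC_eq_append_zeros[OF assms(2) _ _ _ rgf_p _ odd_count])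
    fix u j assume u: "u \<in> with_prefix s (R_b n b)" and j: "length s \<le> j" "j < length p"
      and prefix: "take j u = take j p"
    from j consider "j = length s" | "j = Suc (length s)" by (fastforce simp: p_def)
    then show "if even (U p (Suc j)) then u ! j \<le> p ! j else p ! j = 0"
    proof cases
      case 1
      then show ?thesis using R_b_nth_after_prefix_le[OF u] assms(3)
        by (simp add: p_def U_eq_nz_even_count_take M_def)
    next
      case 2
      then have "take (Suc (length s)) u = s @ [M]" using prefix by (simp add: p_def)
      then have "u ! Suc (length s) \<le> M + 1"
        using R_b_nth_le[of u n b "Suc (length s)"] u room Max_sM
        unfolding with_prefix_def by auto
      then show ?thesis using 2 assms(3,4)
        by (simp add: p_def U_eq_nz_even_count_take nz_even_count_def nth_append)
    qed
  qed (use M prefix_valid room in \<open>auto simp: p_def M_def\<close>)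
  then show ?thesis by (simp add: p_def)
qed

end

theorem proposition3:
  fixes b n k :: nat and s t :: "nat list"
  assumes "b \<ge> 2" and "even b"
    and "1 \<le> k" and "k + 2 \<le> n"
    and "length s = k"
    and "is_last_coRGC (with_prefix s (R_b n b)) t"
  defines "M \<equiv> min b (Max (set s) + 1)"
  defines "Uk \<equiv> U s (k + 1)"
  shows "(even Uk \<and> even M \<longrightarrow> t = s @ [M] @ replicate (n - k - 1) 0)
       \<and> (even Uk \<and> odd M \<longrightarrow> t = s @ [M, M + 1] @ replicate (n - k - 2) 0)
       \<and> (odd Uk \<longrightarrow> t = s @ replicate (n - k) 0)"
proof -
  have nonempty: "s \<noteq> []" and room: "length s + 2 \<le> n" using assms(3-5) by auto
  have "t \<in> with_prefix s (R_b n b)" using assms(6) unfolding is_last_coRGC_def by simp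
  from with_prefix_R_b_prefix[OF this] room
  have valid: "rgf (length s) s" "\<forall>x\<in>set s. x \<le> b" by simp_all
  have Uk: "Uk = nz_even_count s" using assms(5) by (simp add: Uk_def U_eq_nz_even_count_take)
  show ?thesis
  proof (intro conjI impI)
    assume "even Uk \<and> even M"
    then have "even (nz_even_count s)" "even (min b (Max (set s) + 1))"
      using Uk unfolding M_def by simp_all
    from last_coRGC_even_count_even_max[OF nonempty room valid assms(6) this] assms(1,5)
    show "t = s @ [M] @ replicate (n - k - 1) 0" unfolding M_def by simp
  next
    assume "even Uk \<and> odd M"
    then have "even (nz_even_count s)" "odd (min b (Max (set s) + 1))"
      using Uk unfolding M_def by simp_all
    from last_coRGC_even_count_odd_max[OF nonempty room valid assms(6) this assms(2)] assms(5)
    show "t = s @ [M, M + 1] @ replicate (n - k - 2) 0" unfolding M_def by simp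
  next
    assume "odd Uk"
    with Uk have "odd (nz_even_count s)" by simp
    from last_coRGC_odd_count[OF nonempty room valid assms(6) this] assms(5)
    show "t = s @ replicate (n - k) 0" by simp
  qed
qed

end
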